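(* Let $G$ and $H$ be Markov-equivalent DAGs on the same vertex set, and let $j$ be a sink node of $G$ that is not a sink node of $H$. Suppose $H$ has at least two edges, one of which is $j\to l$. If every edge $i\to k$ of $H$ other than $j\to l$ satisfies $j\in\mathrm{pa}_H(k)$, then $j$ is a source node of a connected component of $H$ that is complete (any two of its vertices are adjacent), and every other connected component of $H$ is an isolated vertex.
   Context: Two DAGs are Markov equivalent iff they have the same skeleton (underlying undirected graph) and the same v-structures (edges $i\to k\leftarrow m$ with $i,m$ nonadjacent). A sink has no outgoing edges; a source has no incoming edges; connected components are those of the skeleton. *)

theory Defs
  imports Main
begin

definition dag :: "'a set \<Rightarrow> ('a \<times> 'a) set \<Rightarrow> bool" where
  "dag V E \<longleftrightarrow> finite V \<and> E \<subseteq> V \<times> V \<and> acyclic E"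

definition adj :: "('a \<times> 'a) set \<Rightarrow> 'a \<Rightarrow> 'a \<Rightarrow> bool" where
  "adj E i j \<longleftrightarrow> (i, j) \<in> E \<or> (j, i) \<in> E"

definition skeleton :: "('a \<times> 'a) set \<Rightarrow> ('a \<times> 'a) set" where
  "skeleton E = E \<union> E\<inverse>"

definition vstructures :: "('a \<times> 'a) set \<Rightarrow> ('a \<times> 'a \<times> 'a) set" where
  "vstructures E = {(i, k, m). (i, k) \<in> E \<and> (m, k) \<in> E \<and> i \<noteq> m \<and> \<not> adj E i m}"

definition markov_equiv :: "'a set \<Rightarrow> ('a \<times> 'a) set \<Rightarrow> ('a \<times> 'a) set \<Rightarrow> bool" where
  "markov_equiv V G H \<longleftrightarrow> dag V G \<and> dag V H \<and> skeleton G = skeleton H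
     \<and> vstructures G = vstructures H"

definition sink :: "('a \<times> 'a) set \<Rightarrow> 'a \<Rightarrow> bool" where
  "sink E j \<longleftrightarrow> (\<forall>k. (j, k) \<notin> E)"

definition source :: "('a \<times> 'a) set \<Rightarrow> 'a \<Rightarrow> bool" where
  "source E j \<longleftrightarrow> (\<forall>i. (i, j) \<notin> E)"

definition pa :: "('a \<times> 'a) set \<Rightarrow> 'a \<Rightarrow> 'a set" where
  "pa E k = {i. (i, k) \<in> E}"

definition component :: "'a set \<Rightarrow> ('a \<times> 'a) set \<Rightarrow> 'a \<Rightarrow> 'a set" where
  "component V E x = {y \<in> V. (x, y) \<in> (skeleton E)\<^sup>*}"

definition complete_on :: "('a \<times> 'a) set \<Rightarrow> 'a set \<Rightarrow> bool" where
  "complete_on E C \<longleftrightarrow> (\<forall>a\<in>C. \<forall>b\<in>C. a \<noteq> b \<longrightarrow> adj E a b)"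

end

theory Submission
  imports Defs
begin

text \<open>Every edge of H ends in a child of j, and j, being a sink of G, cannot be the
  centre of a v-structure of H; so every tail of an edge is j or adjacent to j, and since j
  has no parents in H it is a child of j. Hence the component of j is j together with its
  children and every other vertex is isolated. Any two children k, m of j are adjacent:
  otherwise k \<rightarrow> j \<leftarrow> m (the G-orientation, j being a sink of G) would be a
  v-structure of G, hence of H, contradicting j \<rightarrow> k in H.\<close>

lemma adj_iff_in_skeleton: "adj E a b \<longleftrightarrow> (a, b) \<in> skeleton E"
  unfolding adj_def skeleton_def by auto

lemma markov_equiv_adj_iff:
  assumes "markov_equiv V G H"
  shows "adj G a b \<longleftrightarrow> adj H a b"
  using assms unfolding markov_equiv_def adj_iff_in_skeleton by simp

lemma markov_equiv_sink_reverses_out_edges: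
  assumes "markov_equiv V G H" and "sink G j" and "(j, k) \<in> H"
  shows "(k, j) \<in> G"
  using assms markov_equiv_adj_iff[OF assms(1), of j k]
  unfolding adj_def sink_def by auto

lemma markov_equiv_sink_coparent_adj:
  assumes "markov_equiv V G H" and "sink G j"
    and "(j, k) \<in> H" and "(i, k) \<in> H" and "i \<noteq> j"
  shows "adj H i j"
proof (rule ccontr)
  assume "\<not> adj H i j"
  then have "(j, k, i) \<in> vstructures H"
    using assms(3-5) unfolding vstructures_def adj_def by auto
  then have "(j, k, i) \<in> vstructures G"
    using assms(1) unfolding markov_equiv_def by simp
  then show False using assms(2) unfolding vstructures_def sink_def by auto
qed

lemma markov_equiv_sink_children_adj:
  assumes "markov_equiv V G H" and "sink G j"
    and "(j, k) \<in> H" and "(j, m) \<in> H" and "k \<noteq> m"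
  shows "adj H k m"
proof (rule ccontr)
  assume "\<not> adj H k m"
  then have "\<not> adj G k m" using markov_equiv_adj_iff[OF assms(1)] by simp
  moreover have "(k, j) \<in> G" "(m, j) \<in> G"
    using markov_equiv_sink_reverses_out_edges[OF assms(1,2)] assms(3,4) by auto
  ultimately have "(k, j, m) \<in> vstructures G"
    using assms(5) unfolding vstructures_def by simp
  then have "(k, j) \<in> H"
    using assms(1) unfolding markov_equiv_def vstructures_def by auto
  moreover have "acyclic H" using assms(1) unfolding markov_equiv_def dag_def by simp
  ultimately show False using assms(3) by (meson acyclic_def r_into_trancl' trancl_into_trancl)
qed

lemma rtrancl_subset_Sigma_cases:
  assumes "(x, y) \<in> r\<^sup>*" and "r \<subseteq> S \<times> S"
  shows "x = y \<or> x \<in> S \<and> y \<in> S"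
  using assms trancl_subset_Sigma[OF assms(2)] by (auto simp: rtrancl_eq_or_trancl)

lemma component_subset_closed:
  assumes "skeleton E \<subseteq> S \<times> S" and "x \<in> S"
  shows "component V E x \<subseteq> S"
proof
  fix y assume "y \<in> component V E x"
  then have "(x, y) \<in> (skeleton E)\<^sup>*" unfolding component_def by simp
  from rtrancl_subset_Sigma_cases[OF this assms(1)] show "y \<in> S" using assms(2) by auto
qed

lemma component_eq_singleton_outside:
  assumes "skeleton E \<subseteq> S \<times> S" and "x \<in> V" and "x \<notin> S"
  shows "component V E x = {x}"
proof -
  have "y = x" if "(x, y) \<in> (skeleton E)\<^sup>*" for y
    using rtrancl_subset_Sigma_cases[OF that assms(1)] assms(3) by auto
  then show ?thesis using assms(2) unfolding component_def by auto
qed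

theorem mainTheorem17:
  fixes V :: "'a set" and G H :: "('a \<times> 'a) set" and j l :: 'a
  assumes "markov_equiv V G H"
    and "j \<in> V"
    and "sink G j" and "\<not> sink H j"
    and "card H \<ge> 2"
    and "(j, l) \<in> H"
    and "\<forall>(i, k) \<in> H. (i, k) \<noteq> (j, l) \<longrightarrow> j \<in> pa H k"
  shows "(\<forall>i \<in> component V H j. (i, j) \<notin> H)
       \<and> complete_on H (component V H j)
       \<and> (\<forall>x \<in> V. x \<notin> component V H j \<longrightarrow> component V H x = {x})"
proof -
  have dag: "acyclic H" "H \<subseteq> V \<times> V"
    using assms(1) unfolding markov_equiv_def dag_def by auto
  have heads: "(j, k) \<in> H" if "(i, k) \<in> H" for i k
    using assms(6,7) that unfolding pa_def by fastforce
  have no_parent: "(i, j) \<notin> H" for i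
    using dag(1) heads unfolding acyclic_def by blast
  define S where "S = insert j {k. (j, k) \<in> H}"
  have tails: "i = j \<or> (j, i) \<in> H" if "(i, k) \<in> H" for i k
    using markov_equiv_sink_coparent_adj[OF assms(1,3) heads[OF that] that] no_parent
    unfolding adj_def by blast
  have "a \<in> S \<and> b \<in> S" if "(a, b) \<in> H" for a b
    using heads[OF that] tails[OF that] unfolding S_def by auto
  then have "skeleton H \<subseteq> S \<times> S"
    unfolding skeleton_def by auto
  moreover have "S \<subseteq> component V H j"
    using assms(2) dag(2) unfolding S_def component_def skeleton_def by auto
  moreover have "complete_on H S"
    using markov_equiv_sink_children_adj[OF assms(1,3)]
    unfolding complete_on_def S_def adj_def by auto
  ultimately have component: "component V H j = S"
    using component_subset_closed[of H S j V] S_def by blast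
  have "component V H x = {x}" if "x \<in> V" "x \<notin> S" for x
    using component_eq_singleton_outside \<open>skeleton H \<subseteq> S \<times> S\<close> that .
  with \<open>complete_on H S\<close> no_parent show ?thesis
    unfolding component by (intro conjI ballI impI) simp_all
qed

end
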